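(* Let $Q$ be a $\partial_\psi$-delta operator with $\partial_\psi$-basic polynomial sequence $(q_n)$, let $S\in\Sigma_\psi$ be invertible and let $(s_n)$, $s_n=S^{-1}q_n$, be the Sheffer $\psi$-polynomials of $Q$ relative to $S$. Then for every $T\in\Sigma_\psi$, every $p\in P$ and every $y\in F$, $$T\,p(x+_\psi y)=\sum_{k\ge0}\frac{s_k(y)}{k_\psi!}\,Q^k\,S\,T\,p(x),$$ where $p(x+_\psi y):=(E^y(\partial_\psi)p)(x)$ and operators act in the variable $x$.
   Context: Let $F$ be a field of characteristic $0$, $P=F[x]$. Fix $(\psi_n)_{n\ge0}$ in $F$ with $\psi_0=1$, $\psi_n\ne0$, $\psi_{-1}=0$; $n_\psi=\psi_{n-1}/\psi_n$, $n_\psi!=1/\psi_n$, $0_\psi!=1$. $\partial_\psi x^n=n_\psi x^{n-1}$ (linear); $E^a(\partial_\psi)=\sum_k\frac{a^k}{k_\psi!}\partial_\psi^k$. $\Sigma_\psi$: algebra of linear operators on $P$ commuting with all $E^a(\partial_\psi)$. A $\partial_\psi$-delta operator is $Q\in\Sigma_\psi$ with $Q(x)$ a nonzero constant; its $\partial_\psi$-basic sequence: $\deg q_n=n$, $q_0=1$, $q_n(0)=0$ for $n>0$, $Qq_n=n_\psi q_{n-1}$. Sheffer $\psi$-polynomials of $Q$: $\deg s_n=n$, $s_0$ a nonzero constant, $Qs_n=n_\psi s_{n-1}$. *)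

theory Defs
  imports "HOL-Computational_Algebra.Polynomial"
begin

text \<open>The sequence psi is a function nat => 'a with psi 0 = 1 and psi n nonzero;
  psi (-1) = 0 is encoded by making the psi-number of 0 equal to 0.\<close>

definition psi_seq :: "(nat \<Rightarrow> 'a::field_char_0) \<Rightarrow> bool" where
  "psi_seq psi \<longleftrightarrow> psi 0 = 1 \<and> (\<forall>n. psi n \<noteq> 0)"

definition npsi :: "(nat \<Rightarrow> 'a::field_char_0) \<Rightarrow> nat \<Rightarrow> 'a" where
  "npsi psi n = (if n = 0 then 0 else psi (n - 1) / psi n)"

definition factpsi :: "(nat \<Rightarrow> 'a::field_char_0) \<Rightarrow> nat \<Rightarrow> 'a" where
  "factpsi psi n = 1 / psi n"

definition dpsi :: "(nat \<Rightarrow> 'a::field_char_0) \<Rightarrow> 'a poly \<Rightarrow> 'a poly" where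
  "dpsi psi p = (\<Sum>n\<le>degree p. monom (coeff p n * npsi psi n) (n - 1))"

text \<open>E^a(dpsi) = sum_k a^k / k_psi! dpsi^k; the sum is finite on each polynomial
  since dpsi^k p = 0 for k > degree p.\<close>
definition Epsi :: "(nat \<Rightarrow> 'a::field_char_0) \<Rightarrow> 'a \<Rightarrow> 'a poly \<Rightarrow> 'a poly" where
  "Epsi psi a p = (\<Sum>k\<le>degree p. smult (a ^ k / factpsi psi k) ((dpsi psi ^^ k) p))"

definition lin_op :: "('a::field_char_0 poly \<Rightarrow> 'a poly) \<Rightarrow> bool" where
  "lin_op L \<longleftrightarrow> (\<forall>p q. L (p + q) = L p + L q) \<and> (\<forall>c p. L (smult c p) = smult c (L p))"

definition Sigma_psi :: "(nat \<Rightarrow> 'a::field_char_0) \<Rightarrow> ('a poly \<Rightarrow> 'a poly) \<Rightarrow> bool" where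
  "Sigma_psi psi T \<longleftrightarrow> lin_op T \<and> (\<forall>a p. T (Epsi psi a p) = Epsi psi a (T p))"

definition delta_op :: "(nat \<Rightarrow> 'a::field_char_0) \<Rightarrow> ('a poly \<Rightarrow> 'a poly) \<Rightarrow> bool" where
  "delta_op psi Q \<longleftrightarrow> Sigma_psi psi Q \<and> (\<exists>c. c \<noteq> 0 \<and> Q [:0, 1:] = [:c:])"

definition basic_seq :: "(nat \<Rightarrow> 'a::field_char_0) \<Rightarrow> ('a poly \<Rightarrow> 'a poly) \<Rightarrow> (nat \<Rightarrow> 'a poly) \<Rightarrow> bool" where
  "basic_seq psi Q q \<longleftrightarrow>
     (\<forall>n. degree (q n) = n) \<and> q 0 = 1 \<and> (\<forall>n>0. poly (q n) 0 = 0) \<and>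
     (\<forall>n. Q (q n) = smult (npsi psi n) (q (n - 1)))"

end

theory Submission
  imports Defs
begin

text \<open>A polynomial f is determined by the numbers (Q^m f)(0), m \<ge> 0: since
  (Q^k q_n)(0) = \<delta>_kn n_\<psi>!, one has f = \<Sum>_j (Q^j f)(0) / j_\<psi>! q_j.
  Evaluating at y is evaluating E^y(\<partial>_\<psi>) at 0, so for U in \<Sigma>_\<psi> expanding E^y f
  in the q_j gives U = \<Sum>_j (U q_j)(0) / j_\<psi>! Q^j; in particular U commutes with Q.
  Every linear U commuting with Q has the same expansion, as both sides have the
  same values (Q^m _)(0). Taking U = E^y(\<partial>_\<psi>) S^-1, for which (U q_k)(0) = s_k(y),
  and using T E^y(\<partial>_\<psi>) = E^y(\<partial>_\<psi>) T gives the theorem; the sum is finite because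
  Q^k annihilates polynomials of degree < k.\<close>

lemma lin_op_add: "lin_op L \<Longrightarrow> L (a + b) = L a + L b"
  by (simp add: lin_op_def)

lemma lin_op_smult: "lin_op L \<Longrightarrow> L (smult c a) = smult c (L a)"
  by (simp add: lin_op_def)

lemma lin_op_zero: "lin_op L \<Longrightarrow> L 0 = 0"
  using lin_op_smult[of L 0 0] by simp

lemma lin_op_sum: "lin_op L \<Longrightarrow> L (sum f A) = (\<Sum>x\<in>A. L (f x))"
  by (induction A rule: infinite_finite_induct) (simp_all add: lin_op_zero lin_op_add)

lemma lin_op_comp: "lin_op L \<Longrightarrow> lin_op M \<Longrightarrow> lin_op (L \<circ> M)"
  by (simp add: lin_op_def)

lemma lin_op_funpow: "lin_op L \<Longrightarrow> lin_op (L ^^ k)"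
  by (induction k) (auto simp: lin_op_def)

lemma lin_op_inverse:
  assumes "lin_op L" and "\<And>r. L' (L r) = r" and "\<And>r. L (L' r) = r"
  shows "lin_op L'"
  unfolding lin_op_def
proof (intro conjI allI)
  fix a b
  have "L' (a + b) = L' (L (L' a + L' b))"
    using assms by (simp add: lin_op_add)
  then show "L' (a + b) = L' a + L' b" by (simp add: assms(2))
next
  fix c a
  have "L' (smult c a) = L' (L (smult c (L' a)))"
    using assms by (simp add: lin_op_smult)
  then show "L' (smult c a) = smult c (L' a)" by (simp add: assms(2))
qed

lemma funpow_commute: "(\<And>r. L (M r) = M (L r)) \<Longrightarrow> L ((M ^^ k) r) = (M ^^ k) (L r)"
  by (induction k) auto

lemma factpsi_nonzero: "psi_seq psi \<Longrightarrow> factpsi psi n \<noteq> 0"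
  by (simp add: factpsi_def psi_seq_def)

lemma factpsi_Suc: "psi_seq psi \<Longrightarrow> factpsi psi (Suc n) = npsi psi (Suc n) * factpsi psi n"
  by (simp add: factpsi_def npsi_def psi_seq_def)

lemma factpsi_eq_prod_npsi:
  assumes "psi_seq psi"
  shows "factpsi psi n = (\<Prod>i<n. npsi psi (Suc i))"
proof (induction n)
  case 0
  then show ?case using assms by (simp add: factpsi_def psi_seq_def)
next
  case (Suc n)
  then show ?case by (simp add: factpsi_Suc[OF assms])
qed

lemma coeff_dpsi: "coeff (dpsi psi p) m = coeff p (Suc m) * npsi psi (Suc m)"
proof -
  have "coeff (dpsi psi p) m = (\<Sum>n\<le>degree p. if n - 1 = m then coeff p n * npsi psi n else 0)"
    unfolding dpsi_def coeff_sum coeff_monom by (intro sum.cong) auto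
  also have "\<dots> = (\<Sum>n\<in>{..degree p} \<inter> {Suc m}. coeff p n * npsi psi n)"
    by (rule sum.mono_neutral_cong_right) (auto simp: npsi_def)
  also have "\<dots> = coeff p (Suc m) * npsi psi (Suc m)"
    by (cases "Suc m \<le> degree p") (auto simp: coeff_eq_0)
  finally show ?thesis .
qed

lemma coeff_dpsi_funpow:
  "coeff ((dpsi psi ^^ k) p) m = coeff p (m + k) * (\<Prod>i<k. npsi psi (m + Suc i))"
proof (induction k arbitrary: m)
  case (Suc k)
  have "coeff ((dpsi psi ^^ Suc k) p) m = coeff ((dpsi psi ^^ k) p) (Suc m) * npsi psi (Suc m)"
    by (simp add: coeff_dpsi)
  then show ?case
    unfolding Suc prod.lessThan_Suc_shift by simp
qed simp

lemma dpsi_funpow_eq_0: "degree p < k \<Longrightarrow> (dpsi psi ^^ k) p = 0"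
  by (rule poly_eqI) (simp add: coeff_dpsi_funpow coeff_eq_0)

lemma lin_op_dpsi: "lin_op (dpsi psi)"
  unfolding lin_op_def by (auto intro: poly_eqI simp: coeff_dpsi algebra_simps)

lemma Epsi_eq_sum:
  assumes "degree p \<le> N"
  shows "Epsi psi a p = (\<Sum>k\<le>N. smult (a ^ k / factpsi psi k) ((dpsi psi ^^ k) p))"
  unfolding Epsi_def
  by (rule sum.mono_neutral_left) (use assms in \<open>auto simp: dpsi_funpow_eq_0\<close>)

lemma lin_op_Epsi: "lin_op (Epsi psi a)"
  unfolding lin_op_def
proof (intro conjI allI)
  fix p r :: "'a poly"
  define N where "N = degree p + degree r"
  have "degree p \<le> N" "degree r \<le> N" "degree (p + r) \<le> N"
    using degree_add_le_max[of p r] by (simp_all add: N_def)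
  then show "Epsi psi a (p + r) = Epsi psi a p + Epsi psi a r"
    by (simp add: Epsi_eq_sum lin_op_add[OF lin_op_funpow[OF lin_op_dpsi]] sum.distrib
        smult_add_right)
next
  fix c and p :: "'a poly"
  have "degree (smult c p) \<le> degree p" by (rule degree_smult_le)
  then show "Epsi psi a (smult c p) = smult c (Epsi psi a p)"
    by (intro poly_eqI) (simp add: Epsi_eq_sum[of _ "degree p"] coeff_sum sum_distrib_left
        lin_op_smult[OF lin_op_funpow[OF lin_op_dpsi]] mult_ac)
qed

lemma poly_Epsi_0:
  assumes "psi_seq psi"
  shows "poly (Epsi psi y p) 0 = poly p y"
proof -
  have "poly (Epsi psi y p) 0 = (\<Sum>k\<le>degree p. y ^ k / factpsi psi k * (coeff p k * factpsi psi k))"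
    by (simp add: Epsi_def poly_0_coeff_0 coeff_sum coeff_dpsi_funpow
        factpsi_eq_prod_npsi[OF assms])
  also have "\<dots> = (\<Sum>k\<le>degree p. coeff p k * y ^ k)"
    by (intro sum.cong) (simp_all add: factpsi_nonzero[OF assms])
  finally show ?thesis by (simp add: poly_altdef)
qed

lemma in_span_degree_sequence:
  fixes q :: "nat \<Rightarrow> 'a::field poly"
  assumes deg: "\<And>n. degree (q n) = n" and nz: "\<And>n. q n \<noteq> 0" and "degree r \<le> n"
  shows "\<exists>d. r = (\<Sum>j\<le>n. smult (d j) (q j))"
  using \<open>degree r \<le> n\<close>
proof (induction n arbitrary: r)
  case 0
  have r: "r = [:coeff r 0:]" and q0: "q 0 = [:coeff (q 0) 0:]"
    using 0 deg[of 0] by (simp_all add: degree_0_id)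
  then have "coeff (q 0) 0 \<noteq> 0"
    using nz[of 0] by auto
  then have "r = smult (coeff r 0 / coeff (q 0) 0) (q 0)"
    by (subst r, subst q0) simp
  then show ?case by (intro exI[of _ "\<lambda>_. coeff r 0 / coeff (q 0) 0"]) simp
next
  case (Suc n)
  define c where "c = coeff r (Suc n) / lead_coeff (q (Suc n))"
  define r' where "r' = r - smult c (q (Suc n))"
  have "coeff (q (Suc n)) (Suc n) \<noteq> 0"
    using deg[of "Suc n"] nz[of "Suc n"] by (metis leading_coeff_0_iff)
  then have "coeff r' (Suc n) = 0"
    using deg[of "Suc n"] by (simp add: r'_def c_def)
  moreover have "degree r' \<le> Suc n"
    using Suc.prems deg[of "Suc n"] by (simp add: r'_def degree_diff_le)
  ultimately have "degree r' \<le> n"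
    by (metis le_SucE leading_coeff_0_iff nat.distinct(1) degree_0)
  then obtain d where d: "r' = (\<Sum>j\<le>n. smult (d j) (q j))"
    using Suc.IH by blast
  have "r = (\<Sum>j\<le>Suc n. smult ((d(Suc n := c)) j) (q j))"
    using d by (simp add: r'_def algebra_simps)
  then show ?case by blast
qed

locale basic_sequence =
  fixes psi :: "nat \<Rightarrow> 'a::field_char_0"
    and Q :: "'a poly \<Rightarrow> 'a poly"
    and q :: "nat \<Rightarrow> 'a poly"
  assumes psi_seq: "psi_seq psi"
    and Sigma_psi_Q: "Sigma_psi psi Q"
    and basic_seq: "basic_seq psi Q q"
begin

lemma lin_op_Q: "lin_op Q"
  using Sigma_psi_Q by (simp add: Sigma_psi_def)

lemma lin_op_funpow_Q: "lin_op (Q ^^ k)"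
  using lin_op_funpow[OF lin_op_Q] .

lemma funpow_Q_Epsi: "(Q ^^ k) (Epsi psi a r) = Epsi psi a ((Q ^^ k) r)"
  using Sigma_psi_Q by (intro funpow_commute[symmetric]) (simp add: Sigma_psi_def)

lemma Q_q: "Q (q n) = smult (npsi psi n) (q (n - 1))"
  and degree_q: "degree (q n) = n"
  and q_0: "q 0 = 1"
  and poly_q_0: "n > 0 \<Longrightarrow> poly (q n) 0 = 0"
  using basic_seq by (simp_all add: basic_seq_def)

lemma q_nonzero: "q n \<noteq> 0"
  by (cases n) (use degree_q[of n] q_0 in auto)

lemma funpow_Q_q:
  "k \<le> n \<Longrightarrow> (Q ^^ k) (q n) = smult (factpsi psi n / factpsi psi (n - k)) (q (n - k))"
proof (induction k)
  case (Suc k)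
  then have "factpsi psi (n - k) = npsi psi (n - k) * factpsi psi (n - Suc k)"
    using factpsi_Suc[OF psi_seq, of "n - Suc k"] by (simp add: Suc_diff_Suc)
  moreover from this have "npsi psi (n - k) \<noteq> 0"
    using factpsi_nonzero[OF psi_seq] by force
  ultimately show ?case
    using Suc
    by (simp add: lin_op_smult[OF lin_op_Q] Q_q factpsi_nonzero[OF psi_seq] diff_diff_add)
qed (simp add: factpsi_nonzero[OF psi_seq])

lemma funpow_Q_q_eq_0:
  assumes "n < k"
  shows "(Q ^^ k) (q n) = 0"
proof -
  from assms have "Suc n \<le> k" by simp
  then show ?thesis
  proof (induction k rule: dec_induct)
    case base
    show ?case
      by (simp add: funpow_Q_q lin_op_smult[OF lin_op_Q] Q_q npsi_def)
  qed (simp add: lin_op_zero[OF lin_op_Q])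
qed

lemma poly_funpow_Q_q_0: "poly ((Q ^^ k) (q n)) 0 = (if k = n then factpsi psi n else 0)"
  by (cases k n rule: linorder_cases)
    (use psi_seq in \<open>simp_all add: funpow_Q_q funpow_Q_q_eq_0 poly_q_0 q_0 factpsi_def psi_seq_def\<close>)

lemma expansion_in_basic_sequence:
  assumes "degree r \<le> M"
  shows "r = (\<Sum>j\<le>M. smult (poly ((Q ^^ j) r) 0 / factpsi psi j) (q j))"
proof -
  obtain d where d: "r = (\<Sum>j\<le>M. smult (d j) (q j))"
    using in_span_degree_sequence[OF degree_q q_nonzero assms] by blast
  have "poly ((Q ^^ k) r) 0 = d k * factpsi psi k" if "k \<le> M" for k
  proof -
    have "poly ((Q ^^ k) r) 0 = (\<Sum>j\<le>M. d j * (if k = j then factpsi psi j else 0))"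
      by (subst d) (simp add: lin_op_sum[OF lin_op_funpow_Q] lin_op_smult[OF lin_op_funpow_Q]
          poly_sum poly_funpow_Q_q_0)
    also have "\<dots> = d k * factpsi psi k"
      using that by (simp add: if_distrib[of "\<lambda>x. _ * x"] cong: if_cong)
    finally show ?thesis .
  qed
  then show ?thesis
    by (subst d, intro sum.cong) (simp_all add: factpsi_nonzero[OF psi_seq])
qed

lemma funpow_Q_eq_0: "degree r < k \<Longrightarrow> (Q ^^ k) r = 0"
  by (subst expansion_in_basic_sequence[of r "degree r"])
    (simp_all add: lin_op_sum[OF lin_op_funpow_Q] lin_op_smult[OF lin_op_funpow_Q] funpow_Q_q_eq_0)

lemma eq_if_poly_funpow_Q_0_eq:
  assumes "\<And>m. poly ((Q ^^ m) a) 0 = poly ((Q ^^ m) b) 0"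
  shows "a = b"
proof -
  define M where "M = max (degree a) (degree b)"
  have "a = (\<Sum>j\<le>M. smult (poly ((Q ^^ j) a) 0 / factpsi psi j) (q j))"
    by (rule expansion_in_basic_sequence) (simp add: M_def)
  also have "\<dots> = (\<Sum>j\<le>M. smult (poly ((Q ^^ j) b) 0 / factpsi psi j) (q j))"
    by (simp add: assms)
  also have "\<dots> = b"
    by (rule expansion_in_basic_sequence[symmetric]) (simp add: M_def)
  finally show ?thesis .
qed

lemma Sigma_psi_expansion:
  assumes U: "Sigma_psi psi U" and "degree r \<le> M"
  shows "U r = (\<Sum>j\<le>M. smult (poly (U (q j)) 0 / factpsi psi j) ((Q ^^ j) r))"
proof (rule poly_ext)
  fix y
  have lin_U: "lin_op U" and U_Epsi: "\<And>a p. U (Epsi psi a p) = Epsi psi a (U p)"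
    using U by (auto simp: Sigma_psi_def)
  define N where "N = max M (degree (Epsi psi y r))"
  have "poly (U r) y = poly (U (Epsi psi y r)) 0"
    by (simp add: U_Epsi poly_Epsi_0[OF psi_seq])
  also have "Epsi psi y r = (\<Sum>j\<le>N. smult (poly ((Q ^^ j) (Epsi psi y r)) 0 / factpsi psi j) (q j))"
    by (rule expansion_in_basic_sequence) (simp add: N_def)
  also have "poly (U \<dots>) 0 = (\<Sum>j\<le>N. poly ((Q ^^ j) r) y / factpsi psi j * poly (U (q j)) 0)"
    by (simp add: lin_op_sum[OF lin_U] lin_op_smult[OF lin_U] poly_sum funpow_Q_Epsi
        poly_Epsi_0[OF psi_seq])
  also have "\<dots> = (\<Sum>j\<le>M. poly ((Q ^^ j) r) y / factpsi psi j * poly (U (q j)) 0)"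
    by (rule sum.mono_neutral_right) (use assms(2) in \<open>auto simp: N_def funpow_Q_eq_0\<close>)
  also have "\<dots> = poly (\<Sum>j\<le>M. smult (poly (U (q j)) 0 / factpsi psi j) ((Q ^^ j) r)) y"
    by (simp add: poly_sum mult_ac)
  finally show "poly (U r) y = \<dots>" .
qed

lemma Sigma_psi_commute_Q:
  assumes "Sigma_psi psi U"
  shows "U (Q r) = Q (U r)"
proof -
  define M where "M = degree r + degree (Q r)"
  have "U (Q r) = (\<Sum>j\<le>M. smult (poly (U (q j)) 0 / factpsi psi j) ((Q ^^ j) (Q r)))"
    by (rule Sigma_psi_expansion[OF assms]) (simp add: M_def)
  also have "\<dots> = Q (\<Sum>j\<le>M. smult (poly (U (q j)) 0 / factpsi psi j) ((Q ^^ j) r))"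
    by (simp add: lin_op_sum[OF lin_op_Q] lin_op_smult[OF lin_op_Q] funpow_swap1)
  also have "\<dots> = Q (U r)"
    by (simp add: Sigma_psi_expansion[OF assms, of r M] M_def)
  finally show ?thesis .
qed

lemma commuting_expansion:
  assumes lin_U: "lin_op U" and U_Q: "\<And>r. U (Q r) = Q (U r)" and "degree r \<le> M"
  shows "U r = (\<Sum>k\<le>M. smult (poly (U (q k)) 0 / factpsi psi k) ((Q ^^ k) r))"
proof (rule eq_if_poly_funpow_Q_0_eq)
  fix m
  define N where "N = M + degree ((Q ^^ m) r)"
  have vanish: "(Q ^^ m) ((Q ^^ k) r) = 0" if "M < k" for k
    using that assms(3) by (simp add: funpow_Q_eq_0 lin_op_zero[OF lin_op_funpow_Q])
  have funpow_Q_swap: "(Q ^^ k) ((Q ^^ m) r) = (Q ^^ m) ((Q ^^ k) r)" for k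
    by (rule funpow_commute) (rule funpow_swap1[symmetric])
  have "poly ((Q ^^ m) (U r)) 0 = poly (U ((Q ^^ m) r)) 0"
    by (simp add: funpow_commute U_Q)
  also have "(Q ^^ m) r = (\<Sum>k\<le>N. smult (poly ((Q ^^ k) ((Q ^^ m) r)) 0 / factpsi psi k) (q k))"
    by (rule expansion_in_basic_sequence) (simp add: N_def)
  also have "poly (U \<dots>) 0 = (\<Sum>k\<le>N. poly (U (q k)) 0 / factpsi psi k * poly ((Q ^^ m) ((Q ^^ k) r)) 0)"
    by (simp add: lin_op_sum[OF lin_U] lin_op_smult[OF lin_U] poly_sum funpow_Q_swap mult_ac)
  also have "\<dots> = (\<Sum>k\<le>M. poly (U (q k)) 0 / factpsi psi k * poly ((Q ^^ m) ((Q ^^ k) r)) 0)"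
    by (rule sum.mono_neutral_right) (auto simp: N_def vanish)
  also have "\<dots> = poly ((Q ^^ m) (\<Sum>k\<le>M. smult (poly (U (q k)) 0 / factpsi psi k) ((Q ^^ k) r))) 0"
    by (simp add: lin_op_sum[OF lin_op_funpow_Q] lin_op_smult[OF lin_op_funpow_Q] poly_sum)
  finally show "poly ((Q ^^ m) (U r)) 0 = \<dots>" .
qed

end

theorem mainTheorem15:
  fixes psi :: "nat \<Rightarrow> 'a::field_char_0"
    and Q S Sinv T :: "'a poly \<Rightarrow> 'a poly"
    and q :: "nat \<Rightarrow> 'a poly"
    and p :: "'a poly" and y :: 'a
  assumes "psi_seq psi"
    and "delta_op psi Q"
    and "basic_seq psi Q q"
    and "Sigma_psi psi S"
    and "\<And>r. Sinv (S r) = r" and "\<And>r. S (Sinv r) = r"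
    and "Sigma_psi psi T"
  shows "let s = (\<lambda>n. Sinv (q n));
             term = (\<lambda>k. smult (poly (s k) y / factpsi psi k) ((Q ^^ k) (S (T p))))
         in finite {k. term k \<noteq> 0} \<and> T (Epsi psi y p) = (\<Sum>k | term k \<noteq> 0. term k)"
proof -
  interpret basic_sequence psi Q q
    using assms(1-3) unfolding delta_op_def by unfold_locales simp_all
  define r where "r = S (T p)"
  define t where "t k = smult (poly (Sinv (q k)) y / factpsi psi k) ((Q ^^ k) r)" for k
  define U where "U = Epsi psi y \<circ> Sinv"
  have lin_Sinv: "lin_op Sinv"
    by (rule lin_op_inverse[of S]) (use assms(4-6) in \<open>simp_all add: Sigma_psi_def\<close>)
  have lin_U: "lin_op U"
    by (simp add: U_def lin_op_comp lin_op_Epsi lin_Sinv)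
  have Sinv_Q: "Sinv (Q f) = Q (Sinv f)" for f
    using Sigma_psi_commute_Q[OF assms(4), of "Sinv f"] by (metis assms(5,6))
  have U_Q: "U (Q f) = Q (U f)" for f
    using Sigma_psi_Q by (simp add: U_def Sigma_psi_def Sinv_Q)
  have support: "{k. t k \<noteq> 0} \<subseteq> {..degree r}"
    using funpow_Q_eq_0[of r] by (force simp: t_def not_le[symmetric])
  have "T (Epsi psi y p) = U r"
    using assms(5,7) by (simp add: U_def r_def Sigma_psi_def)
  also have "\<dots> = (\<Sum>k\<le>degree r. smult (poly (U (q k)) 0 / factpsi psi k) ((Q ^^ k) r))"
    by (rule commuting_expansion[OF lin_U U_Q]) simp
  also have "\<dots> = sum t {..degree r}"
    by (simp add: t_def U_def poly_Epsi_0[OF psi_seq])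
  also have "\<dots> = sum t {k. t k \<noteq> 0}"
    by (rule sum.mono_neutral_right) (use support in auto)
  finally show ?thesis
    using finite_subset[OF support] by (simp add: Let_def t_def r_def)
qed

end
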